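(* Let $1\le D\le n-1$ and $1\le x\le D$. There is no deterministic consensus algorithm for $n$ processes (even one that knows $n$, $D$ and $x$) that solves consensus under the message adversary $\lozenge\mathrm{STABLE}_D(x)$. This remains true even for the smaller message adversary consisting of those sequences in $\lozenge\mathrm{STABLE}_D(x)$ whose first $D$ graphs $\mathcal{G}^1,\dots,\mathcal{G}^D$ form an $R$-rooted sequence for some set $R\subseteq\Pi$, where $R$ is not known to the processes a priori.
   Context: Model: a finite set $\Pi$ of $n$ processes with unique identifiers, which never fail and run in lock-step synchronous rounds $r=1,2,\dots$; in each round every process sends a message to every other process, receives some of them, and makes a local state transition. The round-$r$ communication graph $\mathcal{G}^r$ is a directed graph on $\Pi$ with edge $(p\to q)$ iff $q$ receives $p$'s round-$r$ message; all self-loops are always present. A message adversary is a set of infinite sequences of communication graphs (the admissible sequences); an algorithm solves consensus under a message adversary if for every assignment of inputs and every admissible sequence the run satisfies: Termination (every process eventually irrevocably decides), Agreement (all decisions are equal), Validity (every decision is some process's input). A root component of a graph $\mathcal{G}$ is a nonempty $R\subseteq\Pi$ that is the vertex set of a strongly connected component of $\mathcal{G}$ with no edge $(p\to q)$, $q\in R$, $p\notin R$. A graph is rooted if it has exactly one root component $\operatorname{Root}(\mathcal{G})$. A nonempty sequence of consecutive graphs is $R$-rooted if each graph in it is rooted with root component $R$. Compound graph: $(p,q)\in\mathcal{G}\circ\mathcal{G}'$ iff $(p,p')\in\mathcal{G}$ and $(p',q)\in\mathcal{G}'$ for some $p'$. Causal past: $\mathrm{CP}_p(a,a)=\{p\}$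 and, for $a<b$, $\mathrm{CP}_p(a,b)$ is the set of in-neighbours of $p$ in $\mathcal{G}^{a+1}\circ\cdots\circ\mathcal{G}^b$. $\mathrm{DIAM}(D)$: all sequences such that for every subsequence $\mathcal{G}^{r_1},\dots,\mathcal{G}^{r_1+D-1}$ of $D$ consecutive graphs that is $R$-rooted, $R\subseteq \mathrm{CP}_p(r_1-1,r_1+D-1)$ for every $p\in\Pi$. $\lozenge\mathrm{STABILITY}(x)$: all sequences containing, for some $R\subseteq\Pi$, an $R$-rooted subsequence of at least $x$ consecutive graphs. $\mathrm{ROOTED}$: all sequences in which every graph is rooted. $\lozenge\mathrm{STABLE}_D(x)=\mathrm{ROOTED}\cap\lozenge\mathrm{STABILITY}(x)\cap\mathrm{DIAM}(D)$. *)

theory Defs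
  imports Main
begin

(* Processes are the identifiers 0..n-1, i.e. Pi = {..<n}.
   A communication graph is a set of directed edges (p,q) meaning q receives p's message.
   A sequence of graphs is G :: nat => graph, where G r is the round-r graph for r >= 1
   (G 0 is unused). *)

type_synonym graph = "(nat \<times> nat) set"
type_synonym gseq = "nat \<Rightarrow> graph"

definition is_graph :: "nat \<Rightarrow> graph \<Rightarrow> bool" where
  "is_graph n g \<longleftrightarrow> g \<subseteq> {..<n} \<times> {..<n} \<and> (\<forall>p<n. (p, p) \<in> g)"

definition valid_seq :: "nat \<Rightarrow> gseq \<Rightarrow> bool" where
  "valid_seq n G \<longleftrightarrow> (\<forall>r\<ge>1. is_graph n (G r))"

definition is_root_comp :: "nat \<Rightarrow> graph \<Rightarrow> nat set \<Rightarrow> bool" where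
  "is_root_comp n g R \<longleftrightarrow>
     R \<noteq> {} \<and> R \<subseteq> {..<n} \<and>
     (\<exists>p\<in>R. R = {q. (p, q) \<in> g\<^sup>* \<and> (q, p) \<in> g\<^sup>*}) \<and>
     (\<forall>p q. (p, q) \<in> g \<and> q \<in> R \<longrightarrow> p \<in> R)"

definition rooted :: "nat \<Rightarrow> graph \<Rightarrow> bool" where
  "rooted n g \<longleftrightarrow> (\<exists>!R. is_root_comp n g R)"

definition Root :: "nat \<Rightarrow> graph \<Rightarrow> nat set" where
  "Root n g = (THE R. is_root_comp n g R)"

definition R_rooted :: "nat \<Rightarrow> gseq \<Rightarrow> nat set \<Rightarrow> nat \<Rightarrow> nat \<Rightarrow> bool" where
  "R_rooted n G R a b \<longleftrightarrow> a \<le> b \<and> (\<forall>r\<in>{a..b}. rooted n (G r) \<and> Root n (G r) = R)"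

(* compound graph G(a+1) o ... o G(b); identity if b <= a *)
fun compound :: "gseq \<Rightarrow> nat \<Rightarrow> nat \<Rightarrow> graph" where
  "compound G a 0 = Id"
| "compound G a (Suc b) = (if Suc b \<le> a then Id else compound G a b O G (Suc b))"

definition CP :: "gseq \<Rightarrow> nat \<Rightarrow> nat \<Rightarrow> nat \<Rightarrow> nat set" where
  "CP G p a b = {q. (q, p) \<in> compound G a b}"

definition DIAM :: "nat \<Rightarrow> nat \<Rightarrow> gseq set" where
  "DIAM n D = {G. \<forall>r1\<ge>1. \<forall>R. R_rooted n G R r1 (r1 + D - 1) \<longrightarrow>
                      (\<forall>p<n. R \<subseteq> CP G p (r1 - 1) (r1 + D - 1))}"

definition EV_STABILITY :: "nat \<Rightarrow> nat \<Rightarrow> gseq set" where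
  "EV_STABILITY n x = {G. \<exists>R r1. r1 \<ge> 1 \<and> R \<subseteq> {..<n} \<and> R_rooted n G R r1 (r1 + x - 1)}"

definition ROOTED :: "nat \<Rightarrow> gseq set" where
  "ROOTED n = {G. \<forall>r\<ge>1. rooted n (G r)}"

definition EV_STABLE :: "nat \<Rightarrow> nat \<Rightarrow> nat \<Rightarrow> gseq set" where
  "EV_STABLE n D x = {G. valid_seq n G} \<inter> ROOTED n \<inter> EV_STABILITY n x \<inter> DIAM n D"

definition EV_STABLE_init :: "nat \<Rightarrow> nat \<Rightarrow> nat \<Rightarrow> gseq set" where
  "EV_STABLE_init n D x = {G \<in> EV_STABLE n D x. \<exists>R. R \<subseteq> {..<n} \<and> R_rooted n G R 1 D}"

(* Deterministic algorithm: init p v (initial state of p with input v),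
   msg p s q (message sent by p in state s to q),
   tr p s rcv (new state of p; rcv q = Some m iff p received m from q),
   dec p s (decision output in state s). *)
primrec run :: "nat \<Rightarrow> (nat \<Rightarrow> 'v \<Rightarrow> 's) \<Rightarrow> (nat \<Rightarrow> 's \<Rightarrow> nat \<Rightarrow> 'm)
   \<Rightarrow> (nat \<Rightarrow> 's \<Rightarrow> (nat \<Rightarrow> 'm option) \<Rightarrow> 's) \<Rightarrow> gseq \<Rightarrow> (nat \<Rightarrow> 'v) \<Rightarrow> nat \<Rightarrow> nat \<Rightarrow> 's" where
  "run n init msg tr G inp 0 = (\<lambda>p. init p (inp p))"
| "run n init msg tr G inp (Suc r) =
     (\<lambda>p. tr p (run n init msg tr G inp r p)
            (\<lambda>q. if q < n \<and> (q, p) \<in> G (Suc r)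
                 then Some (msg q (run n init msg tr G inp r q) p) else None))"

(* decisions are irrevocable: p decides v if the first round at which its
   decision output is defined yields v *)
definition decides :: "(nat \<Rightarrow> 's \<Rightarrow> 'v option) \<Rightarrow> (nat \<Rightarrow> nat \<Rightarrow> 's) \<Rightarrow> nat \<Rightarrow> 'v \<Rightarrow> bool" where
  "decides dec st p v \<longleftrightarrow>
     (\<exists>r. dec p (st r p) = Some v \<and> (\<forall>r'<r. dec p (st r' p) = None))"

definition solves_consensus :: "nat \<Rightarrow> gseq set \<Rightarrow> (nat \<Rightarrow> 'v \<Rightarrow> 's) \<Rightarrow> (nat \<Rightarrow> 's \<Rightarrow> nat \<Rightarrow> 'm)
   \<Rightarrow> (nat \<Rightarrow> 's \<Rightarrow> (nat \<Rightarrow> 'm option) \<Rightarrow> 's) \<Rightarrow> (nat \<Rightarrow> 's \<Rightarrow> 'v option) \<Rightarrow> bool" where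
  "solves_consensus n MA init msg tr dec \<longleftrightarrow>
     (\<forall>inp G. G \<in> MA \<longrightarrow>
        (let st = run n init msg tr G inp in
           (\<forall>p<n. \<exists>v. decides dec st p v)
         \<and> (\<forall>p<n. \<forall>q<n. \<forall>v w. decides dec st p v \<and> decides dec st q w \<longrightarrow> v = w)
         \<and> (\<forall>p<n. \<forall>v. decides dec st p v \<longrightarrow> v \<in> inp ` {..<n})))"

end

theory Submission
  imports Defs
begin

(*
  A bivalence argument in the style of Fischer, Lynch and Paterson, run inside a small family of
  admissible sequences. For the first D rounds the graph is one of four graphs built on the chain
  0, 1, 2, ..., D: a path rooted at 0, a path rooted at 1, or either path with a two-element root
  {0, 1}. Afterwards every round is a broadcast graph in which a nonempty set R reaches everybody.
  All these sequences belong to the adversary, with the first D graphs R-rooted.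

  With process 0 starting with v0 and all others with v1, the two paths force different decisions
  (their root hears nobody else), and consecutive prefixes in the cycle path(0) - biroot(0,1) -
  biroot(1,0) - path(1) are indistinguishable to some process that can be isolated afterwards;
  hence some prefix is bivalent. A bivalent prefix stays bivalent after a suitable broadcast
  round: changing the broadcast set one process at a time is invisible to the added process if it
  is isolated afterwards. Iterating gives an admissible sequence that is bivalent forever, which
  contradicts termination.
*)

section \<open>Root components and compound graphs\<close>

lemma rtrancl_in_closed:
  assumes "(q, p) \<in> g\<^sup>*" and "p \<in> X" and "\<forall>a b. (a, b) \<in> g \<and> b \<in> X \<longrightarrow> a \<in> X"
  shows "q \<in> X"
  using assms(1,2) by (induction rule: converse_rtrancl_induct) (use assms(3) in blast)+

lemma is_root_comp_iff:
  assumes ne: "R \<noteq> {}" and Rn: "R \<subseteq> {..<n}"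
    and closed: "\<forall>p q. (p, q) \<in> g \<and> q \<in> R \<longrightarrow> p \<in> R"
    and strong: "\<forall>p\<in>R. \<forall>q\<in>R. (p, q) \<in> g\<^sup>*"
    and reach: "\<forall>q<n. \<exists>r\<in>R. (r, q) \<in> g\<^sup>*"
  shows "is_root_comp n g S \<longleftrightarrow> S = R"
proof
  have scc: "{q. (p, q) \<in> g\<^sup>* \<and> (q, p) \<in> g\<^sup>*} = R" if "p \<in> R" for p
    using rtrancl_in_closed[of _ p g R] that closed strong by blast
  show "S = R \<Longrightarrow> is_root_comp n g S"
    unfolding is_root_comp_def using ne Rn closed scc by blast
  assume "is_root_comp n g S"
  then obtain p where p: "p \<in> S" "S = {q. (p, q) \<in> g\<^sup>* \<and> (q, p) \<in> g\<^sup>*}"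
    and Sn: "S \<subseteq> {..<n}" and closedS: "\<forall>a b. (a, b) \<in> g \<and> b \<in> S \<longrightarrow> a \<in> S"
    unfolding is_root_comp_def by blast
  obtain r where r: "r \<in> R" "(r, p) \<in> g\<^sup>*" using reach p(1) Sn by blast
  have "(p, r) \<in> g\<^sup>*" using rtrancl_in_closed[OF r(2) p(1) closedS] p(2) by auto
  then have "p \<in> R" using rtrancl_in_closed[of p r g R] r(1) closed by blast
  then show "S = R" using p(2) scc by blast
qed

lemma rooted_Root_eqI:
  assumes "R \<noteq> {}" "R \<subseteq> {..<n}"
    "\<forall>p q. (p, q) \<in> g \<and> q \<in> R \<longrightarrow> p \<in> R"
    "\<forall>p\<in>R. \<forall>q\<in>R. (p, q) \<in> g\<^sup>*"
    "\<forall>q<n. \<exists>r\<in>R. (r, q) \<in> g\<^sup>*"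
  shows "rooted n g \<and> Root n g = R"
proof -
  have "is_root_comp n g = (\<lambda>S. S = R)" using is_root_comp_iff[OF assms] by blast
  then show ?thesis unfolding rooted_def Root_def by auto
qed

lemma compound_refl:
  assumes "valid_seq n G" "q < n" "a \<le> b"
  shows "(q, q) \<in> compound G a b"
  using assms(3)
proof (induction b)
  case (Suc b)
  then show ?case
    using assms(1,2) unfolding valid_seq_def is_graph_def by (cases "Suc b \<le> a") auto
qed simp

lemma compound_extend:
  assumes "valid_seq n G" "p < n" "(q, p) \<in> compound G a b" "a \<le> b" "b \<le> c"
  shows "(q, p) \<in> compound G a c"
  using assms(5)
proof (induction c)
  case (Suc c)
  then show ?case
    using assms(1-4) unfolding valid_seq_def is_graph_def by (cases "b = Suc c") auto
qed (use assms(3) in simp)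

lemma edge_in_compound:
  assumes G: "valid_seq n G" and "r < n" "p < n" "a < s" "s \<le> b" "(r, p) \<in> G s"
  shows "(r, p) \<in> compound G a b"
proof -
  obtain s' where s': "s = Suc s'" using \<open>a < s\<close> by (cases s) auto
  have "(r, r) \<in> compound G a s'" using compound_refl[OF G \<open>r < n\<close>] assms(4) s' by simp
  then have "(r, p) \<in> compound G a s" using assms(4,6) s' by auto
  then show ?thesis using compound_extend[OF G \<open>p < n\<close>] assms(4,5) by simp
qed

lemma run_cong_prefix:
  assumes "\<forall>r. 1 \<le> r \<and> r \<le> t \<longrightarrow> G r = G' r"
  shows "run n init msg tr G inp t = run n init msg tr G' inp t"
  using assms
proof (induction t)
  case (Suc t)
  then have "run n init msg tr G inp t = run n init msg tr G' inp t" "G (Suc t) = G' (Suc t)"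
    by simp_all
  then show ?case by (simp only: run.simps)
qed simp

lemma run_Suc_cong:
  assumes "\<forall>q<n. ((q, p) \<in> G (Suc t) \<longleftrightarrow> (q, p) \<in> G' (Suc t)) \<and>
              ((q, p) \<in> G (Suc t) \<longrightarrow> run n init msg tr G inp t q = run n init msg tr G' inp' t q)"
    and "run n init msg tr G inp t p = run n init msg tr G' inp' t p"
  shows "run n init msg tr G inp (Suc t) p = run n init msg tr G' inp' (Suc t) p"
proof -
  have "(\<lambda>q. if q < n \<and> (q, p) \<in> G (Suc t) then Some (msg q (run n init msg tr G inp t q) p) else None)
      = (\<lambda>q. if q < n \<and> (q, p) \<in> G' (Suc t) then Some (msg q (run n init msg tr G' inp' t q) p) else None)"
    using assms(1) by (intro ext) auto
  then show ?thesis using assms(2) by simp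
qed

lemma run_cong_closed_set:
  assumes closed: "\<forall>s>t. \<forall>p\<in>W. \<forall>q<n. ((q, p) \<in> G s \<longleftrightarrow> (q, p) \<in> G' s) \<and> ((q, p) \<in> G s \<longrightarrow> q \<in> W)"
    and agree: "\<forall>p\<in>W. run n init msg tr G inp t p = run n init msg tr G' inp' t p"
    and "t \<le> s" and "p \<in> W"
  shows "run n init msg tr G inp s p = run n init msg tr G' inp' s p"
  using \<open>t \<le> s\<close> \<open>p \<in> W\<close>
proof (induction s arbitrary: p rule: dec_induct)
  case base
  then show ?case using agree by blast
next
  case (step s)
  have "\<forall>q<n. ((q, p) \<in> G (Suc s) \<longleftrightarrow> (q, p) \<in> G' (Suc s)) \<and> ((q, p) \<in> G (Suc s) \<longrightarrow> q \<in> W)"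
    using closed[rule_format, of "Suc s" p] step.hyps(1) step.prems by simp
  then show ?case by (intro run_Suc_cong) (use step.IH step.prems in blast)+
qed

lemma decides_cong:
  "(\<And>r. st r p = st' r p) \<Longrightarrow> decides dec st p v = decides dec st' p v"
  unfolding decides_def by simp

lemma decides_prefix:
  assumes "decides dec st p v"
  obtains r0 where "\<And>st'. (\<forall>r\<le>r0. st' r p = st r p) \<Longrightarrow> decides dec st' p v"
  using assms unfolding decides_def by (metis less_imp_le order_refl)

section \<open>Two combinatorial principles\<close>

lemma extension_forever:
  fixes P :: "(nat \<Rightarrow> 'a) \<Rightarrow> nat \<Rightarrow> bool"
  assumes start: "P G0 t0"
    and step: "\<And>G t. t0 \<le> t \<Longrightarrow> P G t \<Longrightarrow> \<exists>a\<in>A. P (G(Suc t := a)) (Suc t)"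
    and cong: "\<And>G G' t. \<forall>r\<le>t. G r = G' r \<Longrightarrow> P G t \<Longrightarrow> P G' t"
  obtains H where "\<forall>r\<le>t0. H r = G0 r" "\<forall>r>t0. H r \<in> A" "\<forall>t\<ge>t0. P H t"
proof -
  define next_graph where "next_graph G t = (SOME a. a \<in> A \<and> P (G(Suc t := a)) (Suc t))" for G t
  define seq where "seq = rec_nat G0 (\<lambda>k G. G(Suc (t0 + k) := next_graph G (t0 + k)))"
  have seq_Suc: "seq (Suc k) = (seq k)(Suc (t0 + k) := next_graph (seq k) (t0 + k))" for k
    unfolding seq_def by simp
  have next_graph: "next_graph G t \<in> A \<and> P (G(Suc t := next_graph G t)) (Suc t)"
    if "t0 \<le> t" "P G t" for G t
    unfolding next_graph_def using someI_ex[of "\<lambda>a. a \<in> A \<and> P (G(Suc t := a)) (Suc t)"] step[OF that]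
    by blast
  have P_seq: "P (seq k) (t0 + k)" for k
  proof (induction k)
    case 0
    then show ?case using start by (simp add: seq_def)
  next
    case (Suc k)
    then show ?case using next_graph[of "t0 + k" "seq k"] by (metis seq_Suc add_Suc_right le_add1)
  qed
  have seq_stable: "seq (k + j) r = seq k r" if "r \<le> t0 + k" for r k j
    using that by (induction j) (simp_all add: seq_Suc)
  define H where "H r = seq (r - t0) r" for r
  have H_seq: "H r = seq k r" if "r \<le> t0 + k" for r k
    using seq_stable[of r "r - t0" "k - (r - t0)"] that unfolding H_def by simp
  show ?thesis
  proof
    show "\<forall>r\<le>t0. H r = G0 r" using H_seq[of _ 0] by (simp add: seq_def)
    show "\<forall>r>t0. H r \<in> A"
    proof (intro allI impI)
      fix r assume "t0 < r"
      then obtain k where r: "r = Suc (t0 + k)" by (metis less_imp_Suc_add)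
      then have "H r = next_graph (seq k) (t0 + k)" using H_seq[of r "Suc k"] seq_Suc[of k] by simp
      then show "H r \<in> A" using next_graph[OF _ P_seq] by simp
    qed
    show "\<forall>t\<ge>t0. P H t"
      using cong[OF _ P_seq] H_seq by (metis le_add_diff_inverse)
  qed
qed

lemma linked_family_common_value:
  fixes V :: "'p set \<Rightarrow> 'v set"
  assumes fin: "finite P"
    and linked: "\<And>R p. R \<noteq> {} \<Longrightarrow> R \<subseteq> P \<Longrightarrow> p \<in> P \<Longrightarrow> V R \<inter> V (insert p R) \<noteq> {}"
    and univalent: "\<And>R u w. R \<noteq> {} \<Longrightarrow> R \<subseteq> P \<Longrightarrow> u \<in> V R \<Longrightarrow> w \<in> V R \<Longrightarrow> u = w"
    and R: "R \<noteq> {}" "R \<subseteq> P" "u \<in> V R"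
    and S: "S \<noteq> {}" "S \<subseteq> P" "w \<in> V S"
  shows "u = w"
proof -
  have grow: "u' = w'"
    if "R' \<noteq> {}" "R' \<subseteq> P" "u' \<in> V R'" "T \<subseteq> P" "w' \<in> V (T \<union> R')" for R' T u' w'
    using finite_subset[OF that(4) fin] that
  proof (induction T arbitrary: w' rule: finite_induct)
    case empty
    then show ?case using univalent by simp
  next
    case (insert p T)
    obtain y where "y \<in> V (T \<union> R')" "y \<in> V (insert p (T \<union> R'))"
      using linked[of "T \<union> R'" p] insert.prems by blast
    then show ?case using insert univalent[of "insert p (T \<union> R')"] by auto
  qed
  obtain p where "p \<in> R" using R(1) by blast
  then obtain y where "y \<in> V (S \<union> R)"
    using linked[of "S \<union> R" p] R S by blast
  then show ?thesis
    using grow[OF R, of S y] grow[OF S, of R y] R S by (simp add: Un_commute)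
qed

section \<open>The chain graphs\<close>

definition zero_one :: "nat \<Rightarrow> nat \<Rightarrow> bool" where
  "zero_one a b \<longleftrightarrow> (a = 0 \<and> b = 1) \<or> (a = 1 \<and> b = 0)"

text \<open>In line_graph a b the chain is a path and a also feeds every process beyond D, so its root
  is {a}; biroot_graph a b adds the edge b \<rightarrow> a and lets b feed the processes beyond D as well,
  so its root is {a, b}. Within D rounds the far end of the chain cannot tell the two apart.\<close>

locale chain_graphs =
  fixes n D :: nat
  assumes D_pos: "1 \<le> D" and D_less: "D < n"
begin

definition chain :: "nat \<Rightarrow> nat \<Rightarrow> nat \<Rightarrow> nat" where
  "chain a b i = (if i = 0 then a else if i = 1 then b else i)"

definition line_graph :: "nat \<Rightarrow> nat \<Rightarrow> graph" where
  "line_graph a b = {(chain a b i, chain a b (Suc i)) | i. i < D}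
     \<union> {(a, e) | e. D < e \<and> e < n} \<union> {(p, p) | p. p < n}"

definition biroot_graph :: "nat \<Rightarrow> nat \<Rightarrow> graph" where
  "biroot_graph a b = line_graph a b \<union> {(b, a)} \<union> {(b, e) | e. D < e \<and> e < n}"

definition broadcast_graph :: "nat set \<Rightarrow> graph" where
  "broadcast_graph R = {(r, p). r \<in> R \<and> p < n} \<union> {(p, p) | p. p < n}"

lemma chain_0 [simp]: "chain a b 0 = a" and chain_1 [simp]: "chain a b (Suc 0) = b"
  by (auto simp: chain_def)

lemma zero_one_less: "zero_one a b \<Longrightarrow> a < n \<and> b < n"
  using D_pos D_less by (auto simp: zero_one_def)

lemma chain_le: "zero_one a b \<Longrightarrow> i \<le> D \<Longrightarrow> chain a b i \<le> D"
  using D_pos by (auto simp: chain_def zero_one_def)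

lemma chain_less: "zero_one a b \<Longrightarrow> i \<le> D \<Longrightarrow> chain a b i < n"
  using chain_le D_less by fastforce

lemma chain_inj: "zero_one a b \<Longrightarrow> chain a b i = chain a b j \<Longrightarrow> i = j"
  by (auto simp: chain_def zero_one_def split: if_splits)

lemma chain_surj: "zero_one a b \<Longrightarrow> p \<le> D \<Longrightarrow> \<exists>i\<le>D. chain a b i = p"
  using D_pos
  by (intro exI[of _ "if p = a then 0 else if p = b then 1 else p"]) (auto simp: chain_def zero_one_def)

lemma line_graph_chain: "i < D \<Longrightarrow> (chain a b i, chain a b (Suc i)) \<in> line_graph a b"
  unfolding line_graph_def by blast

lemma line_graph_subset: "line_graph a b \<subseteq> biroot_graph a b"
  unfolding biroot_graph_def by blast

lemma line_graph_is_graph: "zero_one a b \<Longrightarrow> is_graph n (line_graph a b)"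
  using chain_less[of a b] zero_one_less[of a b] D_less
  unfolding line_graph_def is_graph_def by fastforce

lemma biroot_graph_is_graph: "zero_one a b \<Longrightarrow> is_graph n (biroot_graph a b)"
  using line_graph_is_graph[of a b] zero_one_less[of a b]
  unfolding biroot_graph_def is_graph_def by blast

lemma broadcast_graph_is_graph: "R \<subseteq> {..<n} \<Longrightarrow> is_graph n (broadcast_graph R)"
  unfolding broadcast_graph_def is_graph_def by auto

lemma line_graph_in_edge_root:
  assumes ab: "zero_one a b" and "(q, a) \<in> line_graph a b"
  shows "q = a"
proof -
  have "chain a b (Suc i) \<noteq> a" for i
    using chain_inj[OF ab, of "Suc i" 0] by auto
  moreover have "a \<le> D" using ab D_pos by (auto simp: zero_one_def)
  ultimately show ?thesis using assms(2) unfolding line_graph_def by (auto dest: sym)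
qed

lemma biroot_graph_in_edge_root:
  assumes ab: "zero_one a b" and p: "p \<in> {a, b}" and q: "q < n"
  shows "(q, p) \<in> biroot_graph a b \<longleftrightarrow> q \<in> {a, b}"
proof
  assume "(q, p) \<in> biroot_graph a b"
  moreover have "q = a" if "i < D" "(q, p) = (chain a b i, chain a b (Suc i))" for i
    using that p chain_inj[OF ab, of "Suc i" 0] chain_inj[OF ab, of "Suc i" 1] by auto
  ultimately show "q \<in> {a, b}"
    using p zero_one_less[OF ab] D_less unfolding line_graph_def biroot_graph_def by auto
next
  have "(a, b) \<in> biroot_graph a b"
    using line_graph_chain[of 0 a b] line_graph_subset D_pos by auto
  moreover have "(b, a) \<in> biroot_graph a b" "(a, a) \<in> biroot_graph a b" "(b, b) \<in> biroot_graph a b"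
    using zero_one_less[OF ab] unfolding biroot_graph_def line_graph_def by auto
  ultimately show "q \<in> {a, b} \<Longrightarrow> (q, p) \<in> biroot_graph a b" using p by blast
qed

lemma chain_in_edge:
  assumes ab: "zero_one a b" and i: "1 \<le> i" "i \<le> D" and q: "q < n"
    and X: "X = line_graph a b \<or> X = biroot_graph a b"
  shows "(q, chain a b i) \<in> X \<longleftrightarrow> q = chain a b i \<or> q = chain a b (i - 1)"
proof
  assume "(q, chain a b i) \<in> X"
  then have "(q, chain a b i) \<in> biroot_graph a b" using X line_graph_subset by blast
  moreover have "q = chain a b (i - 1)" if "(q, chain a b i) = (chain a b j, chain a b (Suc j))" for j
    using that chain_inj[OF ab, of i "Suc j"] by auto
  moreover have "chain a b i \<noteq> a"
    using chain_inj[OF ab, of i 0] i by auto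
  ultimately show "q = chain a b i \<or> q = chain a b (i - 1)"
    using chain_le[OF ab i(2)] unfolding line_graph_def biroot_graph_def by auto
next
  have "(chain a b (i - 1), chain a b i) \<in> line_graph a b"
    using line_graph_chain[of "i - 1" a b] i by simp
  moreover have "(chain a b i, chain a b i) \<in> line_graph a b"
    using chain_less[OF ab i(2)] unfolding line_graph_def by blast
  ultimately show "q = chain a b i \<or> q = chain a b (i - 1) \<Longrightarrow> (q, chain a b i) \<in> X"
    using X line_graph_subset by blast
qed

lemma broadcast_graph_in_edge: "p < n \<Longrightarrow> (q, p) \<in> broadcast_graph R \<longleftrightarrow> q \<in> R \<or> q = p"
  unfolding broadcast_graph_def by auto

lemma chain_rtrancl:
  assumes "\<And>i. i < D \<Longrightarrow> (chain a b i, chain a b (Suc i)) \<in> g" and "i \<le> D"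
  shows "(a, chain a b i) \<in> g\<^sup>*"
  using assms(2)
proof (induction i)
  case (Suc i)
  then show ?case using assms(1)[of i] by (auto intro: rtrancl_into_rtrancl)
qed simp

lemma line_graph_reach:
  assumes ab: "zero_one a b" and "q < n"
  shows "(a, q) \<in> (line_graph a b)\<^sup>*"
proof (cases "q \<le> D")
  case True
  then obtain i where "i \<le> D" "chain a b i = q" using chain_surj[OF ab] by blast
  then show ?thesis using chain_rtrancl[of a b "line_graph a b", OF line_graph_chain] by blast
next
  case False
  then have "(a, q) \<in> line_graph a b" using \<open>q < n\<close> unfolding line_graph_def by auto
  then show ?thesis by blast
qed

lemma line_graph_Root:
  assumes "zero_one a b"
  shows "rooted n (line_graph a b) \<and> Root n (line_graph a b) = {a}"
  by (rule rooted_Root_eqI)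
    (use zero_one_less[OF assms] line_graph_in_edge_root[OF assms] line_graph_reach[OF assms] in auto)

lemma biroot_graph_Root:
  assumes ab: "zero_one a b"
  shows "rooted n (biroot_graph a b) \<and> Root n (biroot_graph a b) = {a, b}"
proof (rule rooted_Root_eqI)
  have "(a, q) \<in> (biroot_graph a b)\<^sup>*" if "q < n" for q
    using line_graph_reach[OF ab that] rtrancl_mono[OF line_graph_subset] by blast
  then show "\<forall>p\<in>{a, b}. \<forall>q\<in>{a, b}. (p, q) \<in> (biroot_graph a b)\<^sup>*"
    and "\<forall>q<n. \<exists>r\<in>{a, b}. (r, q) \<in> (biroot_graph a b)\<^sup>*"
    using zero_one_less[OF ab] biroot_graph_in_edge_root[OF ab] by (auto intro: converse_rtrancl_into_rtrancl)
  show "\<forall>p q. (p, q) \<in> biroot_graph a b \<and> q \<in> {a, b} \<longrightarrow> p \<in> {a, b}"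
    using biroot_graph_in_edge_root[OF ab] biroot_graph_is_graph[OF ab] unfolding is_graph_def by blast
qed (use zero_one_less[OF ab] in auto)

lemma broadcast_graph_Root:
  "R \<noteq> {} \<Longrightarrow> R \<subseteq> {..<n} \<Longrightarrow> rooted n (broadcast_graph R) \<and> Root n (broadcast_graph R) = R"
  by (rule rooted_Root_eqI) (auto simp: broadcast_graph_def)

section \<open>The adversarial sequences\<close>

definition prefix_graph :: "graph \<Rightarrow> bool" where
  "prefix_graph X \<longleftrightarrow> X \<in> {line_graph 0 1, line_graph 1 0, biroot_graph 0 1, biroot_graph 1 0}"

definition proc_set :: "nat set \<Rightarrow> bool" where
  "proc_set R \<longleftrightarrow> R \<noteq> {} \<and> R \<subseteq> {..<n}"

definition adv_seq :: "gseq \<Rightarrow> bool" where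
  "adv_seq G \<longleftrightarrow> (\<exists>X. prefix_graph X \<and> (\<forall>r. 1 \<le> r \<and> r \<le> D \<longrightarrow> G r = X))
     \<and> (\<forall>r>D. \<exists>R. proc_set R \<and> G r = broadcast_graph R)"

lemma prefix_graphE:
  assumes "prefix_graph X"
  obtains a b where "zero_one a b" "X = line_graph a b \<or> X = biroot_graph a b"
  using assms unfolding prefix_graph_def zero_one_def by blast

lemma prefix_graph_is_graph: "prefix_graph X \<Longrightarrow> is_graph n X"
  by (erule prefix_graphE) (auto simp: line_graph_is_graph biroot_graph_is_graph)

lemma prefix_graph_Root:
  assumes "prefix_graph X"
  shows "rooted n X \<and> Root n X \<subseteq> {..<n}"
proof -
  obtain a b where ab: "zero_one a b" and "X = line_graph a b \<or> X = biroot_graph a b"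
    using assms by (rule prefix_graphE)
  then show ?thesis using line_graph_Root[OF ab] biroot_graph_Root[OF ab] zero_one_less[OF ab] by auto
qed

definition prefix_seq :: "graph \<Rightarrow> nat set \<Rightarrow> gseq" where
  "prefix_seq X R = (\<lambda>r. if r \<le> D then X else broadcast_graph R)"

lemma adv_seq_prefix_seq: "prefix_graph X \<Longrightarrow> proc_set R \<Longrightarrow> adv_seq (prefix_seq X R)"
  unfolding adv_seq_def prefix_seq_def by auto

lemma adv_seq_change_tail:
  assumes "adv_seq G" "D \<le> t" "\<forall>r\<le>t. G' r = G r" "\<forall>r>t. \<exists>R. proc_set R \<and> G' r = broadcast_graph R"
  shows "adv_seq G'"
  using assms unfolding adv_seq_def by (metis le_trans not_le)

lemma adv_seq_graph_cases:
  assumes "adv_seq G" and "1 \<le> r"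
  obtains "prefix_graph (G r)" | R where "proc_set R" "G r = broadcast_graph R"
proof (cases "r \<le> D")
  case True
  then show ?thesis using assms that(1) unfolding adv_seq_def by auto
next
  case False
  then show ?thesis using assms that(2) unfolding adv_seq_def by (auto simp: not_le)
qed

lemma adv_seq_valid_seq:
  assumes "adv_seq G"
  shows "valid_seq n G"
  unfolding valid_seq_def
proof (intro allI impI)
  fix r :: nat
  assume "1 \<le> r"
  then show "is_graph n (G r)"
    by (cases rule: adv_seq_graph_cases[OF assms])
      (auto simp: prefix_graph_is_graph broadcast_graph_is_graph proc_set_def)
qed

lemma adv_seq_ROOTED:
  assumes "adv_seq G"
  shows "G \<in> ROOTED n"
  unfolding ROOTED_def
proof (intro CollectI allI impI)
  fix r :: nat
  assume "1 \<le> r"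
  show "rooted n (G r)"
  proof (rule adv_seq_graph_cases[OF assms \<open>1 \<le> r\<close>])
    show "prefix_graph (G r) \<Longrightarrow> rooted n (G r)" using prefix_graph_Root by blast
    show "proc_set R \<Longrightarrow> G r = broadcast_graph R \<Longrightarrow> rooted n (G r)" for R
      using broadcast_graph_Root[of R] unfolding proc_set_def by simp
  qed
qed

lemma chain_compound:
  assumes G: "valid_seq n G" and ab: "zero_one a b"
    and X: "\<forall>r. 1 \<le> r \<and> r \<le> D \<longrightarrow> G r = X" "line_graph a b \<subseteq> X"
    and "j \<le> i" "i \<le> D"
  shows "(chain a b j, chain a b i) \<in> compound G 0 D"
proof -
  have path: "(chain a b j, chain a b i) \<in> compound G 0 i"
    using \<open>j \<le> i\<close> \<open>i \<le> D\<close>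
  proof (induction i rule: dec_induct)
    case base
    then show ?case using compound_refl[OF G chain_less[OF ab]] by simp
  next
    case (step i)
    then have "(chain a b i, chain a b (Suc i)) \<in> G (Suc i)"
      using X line_graph_chain[of i a b] by auto
    then show ?case using step by auto
  qed
  then show ?thesis using compound_extend[OF G chain_less[OF ab \<open>i \<le> D\<close>] path] \<open>i \<le> D\<close> by simp
qed

lemma prefix_Root_subset_CP:
  assumes G: "valid_seq n G" and GX: "\<forall>r. 1 \<le> r \<and> r \<le> D \<longrightarrow> G r = X" and "prefix_graph X"
    and p: "p < n"
  shows "Root n X \<subseteq> CP G p 0 D"
proof -
  obtain a b where ab: "zero_one a b" and X: "X = line_graph a b \<or> X = biroot_graph a b"
    using \<open>prefix_graph X\<close> by (rule prefix_graphE)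
  have sub: "line_graph a b \<subseteq> X" using X line_graph_subset by blast
  have edge: "(r, p) \<in> compound G 0 D" if "(r, p) \<in> X" "r < n" for r
    using edge_in_compound[OF G that(2) p, of 0 1 D] that(1) GX D_pos by auto
  have root_a: "(a, p) \<in> compound G 0 D"
  proof (cases "p \<le> D")
    case True
    then obtain i where "i \<le> D" "chain a b i = p" using chain_surj[OF ab] by blast
    then show ?thesis using chain_compound[OF G ab GX sub, of 0 i] by simp
  next
    case False
    then have "(a, p) \<in> X" using sub p unfolding line_graph_def by auto
    then show ?thesis using edge zero_one_less[OF ab] by blast
  qed
  have root_b: "(b, p) \<in> compound G 0 D" if "X = biroot_graph a b"
  proof (cases "p \<le> D")
    case True
    then obtain i where i: "i \<le> D" "chain a b i = p" using chain_surj[OF ab] by blast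
    show ?thesis
    proof (cases "i = 0")
      case True
      then have "(b, p) \<in> X" using that i unfolding biroot_graph_def by simp
      then show ?thesis using edge zero_one_less[OF ab] by blast
    next
      case False
      then show ?thesis using chain_compound[OF G ab GX sub, of 1 i] i by simp
    qed
  next
    case False
    then have "(b, p) \<in> X" using that p unfolding biroot_graph_def by auto
    then show ?thesis using edge zero_one_less[OF ab] by blast
  qed
  show ?thesis
    using X root_a root_b line_graph_Root[OF ab] biroot_graph_Root[OF ab] unfolding CP_def by auto
qed

lemma adv_seq_DIAM:
  assumes S: "adv_seq G"
  shows "G \<in> DIAM n D"
  unfolding DIAM_def
proof (intro CollectI allI impI ballI)
  fix r1 R p
  assume r1: "1 \<le> r1" and RR: "R_rooted n G R r1 (r1 + D - 1)" and p: "p < n"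
  obtain X where X: "prefix_graph X" "\<forall>r. 1 \<le> r \<and> r \<le> D \<longrightarrow> G r = X"
    using S unfolding adv_seq_def by blast
  show "R \<subseteq> CP G p (r1 - 1) (r1 + D - 1)"
  proof (cases "r1 = 1")
    case True
    then have "R = Root n X" using RR X(2) D_pos unfolding R_rooted_def by auto
    then show ?thesis
      using prefix_Root_subset_CP[OF adv_seq_valid_seq[OF S] X(2,1) p] True by simp
  next
    case False
    define s where "s = r1 + D - 1"
    have s: "r1 - 1 < s" "D < s" using False r1 D_pos unfolding s_def by auto
    obtain R' where R': "proc_set R'" "G s = broadcast_graph R'"
      using S s(2) unfolding adv_seq_def by blast
    have "Root n (G s) = R" using RR D_pos unfolding R_rooted_def s_def by auto
    then have "R = R'" using broadcast_graph_Root R' unfolding proc_set_def by auto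
    have "(r, p) \<in> compound G (r1 - 1) s" if "r \<in> R" for r
      using edge_in_compound[OF adv_seq_valid_seq[OF S], of r p "r1 - 1" s s]
        that p R' \<open>R = R'\<close> s(1) unfolding broadcast_graph_def proc_set_def by auto
    then show ?thesis unfolding CP_def s_def by auto
  qed
qed

lemma adv_seq_EV_STABLE_init:
  assumes S: "adv_seq G" and x: "1 \<le> x" "x \<le> D"
  shows "G \<in> EV_STABLE_init n D x"
proof -
  obtain X where X: "prefix_graph X" "\<forall>r. 1 \<le> r \<and> r \<le> D \<longrightarrow> G r = X"
    using S unfolding adv_seq_def by blast
  have RX: "rooted n X" "Root n X \<subseteq> {..<n}" using prefix_graph_Root[OF X(1)] by auto
  have "R_rooted n G (Root n X) 1 D" "R_rooted n G (Root n X) 1 (1 + x - 1)"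
    unfolding R_rooted_def using X(2) RX D_pos x by auto
  then show ?thesis
    unfolding EV_STABLE_init_def EV_STABLE_def EV_STABILITY_def
    using adv_seq_valid_seq[OF S] adv_seq_ROOTED[OF S] adv_seq_DIAM[OF S] RX by blast
qed

section \<open>Indistinguishability and valency\<close>

lemma chain_run_cong:
  assumes ab: "zero_one a b"
    and G: "\<forall>r. 1 \<le> r \<and> r \<le> D \<longrightarrow> G r = line_graph a b \<and> G' r = biroot_graph a b"
    and "t \<le> i" "i \<le> D"
  shows "run n init msg tr G inp t (chain a b i) = run n init msg tr G' inp t (chain a b i)"
  using assms(3,4)
proof (induction t arbitrary: i)
  case (Suc t)
  let ?s = "run n init msg tr G inp t" and ?s' = "run n init msg tr G' inp t"
  have same: "?s (chain a b i) = ?s' (chain a b i)" "?s (chain a b (i - 1)) = ?s' (chain a b (i - 1))"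
    using Suc.IH[of i] Suc.IH[of "i - 1"] Suc.prems by simp_all
  show ?case
  proof (rule run_Suc_cong, intro allI impI conjI)
    fix q
    assume "q < n"
    note edge = chain_in_edge[OF ab _ _ this]
    show "(q, chain a b i) \<in> G (Suc t) \<longleftrightarrow> (q, chain a b i) \<in> G' (Suc t)"
      using edge G Suc.prems by simp
    assume "(q, chain a b i) \<in> G (Suc t)"
    then have "q = chain a b i \<or> q = chain a b (i - 1)" using edge G Suc.prems by simp
    then show "?s q = ?s' q" using same by auto
  qed (use same in simp)
qed simp

end

locale consensus_algorithm = chain_graphs n D for n D +
  fixes MA :: "gseq set"
    and init :: "nat \<Rightarrow> 'v \<Rightarrow> 's" and msg :: "nat \<Rightarrow> 's \<Rightarrow> nat \<Rightarrow> 'm"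
    and tr :: "nat \<Rightarrow> 's \<Rightarrow> (nat \<Rightarrow> 'm option) \<Rightarrow> 's" and dec :: "nat \<Rightarrow> 's \<Rightarrow> 'v option"
    and v0 v1 :: 'v
  assumes v0_neq_v1: "v0 \<noteq> v1"
    and adv_seq_in_MA: "adv_seq G \<Longrightarrow> G \<in> MA"
    and solves: "solves_consensus n MA init msg tr dec"
begin

definition inp :: "nat \<Rightarrow> 'v" where
  "inp p = (if p = 0 then v0 else v1)"

abbreviation st :: "gseq \<Rightarrow> nat \<Rightarrow> nat \<Rightarrow> 's" where
  "st G \<equiv> run n init msg tr G inp"

lemma adv_seq_termination: "adv_seq G \<Longrightarrow> p < n \<Longrightarrow> \<exists>v. decides dec (run n init msg tr G i) p v"
  using solves adv_seq_in_MA unfolding solves_consensus_def Let_def by blast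

lemma adv_seq_agreement:
  "adv_seq G \<Longrightarrow> p < n \<Longrightarrow> q < n \<Longrightarrow> decides dec (st G) p v \<Longrightarrow> decides dec (st G) q w \<Longrightarrow> v = w"
  using solves adv_seq_in_MA unfolding solves_consensus_def Let_def by blast

lemma adv_seq_validity:
  "adv_seq G \<Longrightarrow> p < n \<Longrightarrow> decides dec (run n init msg tr G i) p v \<Longrightarrow> v \<in> i ` {..<n}"
  using solves adv_seq_in_MA unfolding solves_consensus_def Let_def by blast

lemma adv_seq_same_decision:
  assumes "adv_seq G" "p < n" "\<And>s. st G s p = st G' s p"
  obtains z where "decides dec (st G) p z" "decides dec (st G') p z"
proof -
  obtain z where z: "decides dec (st G) p z" using adv_seq_termination[OF assms(1,2)] by blast
  moreover have "decides dec (st G') p z" using z decides_cong[of "st G" p "st G'" dec z] assms(3) by simp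
  ultimately show ?thesis by (rule that)
qed

definition valence :: "gseq \<Rightarrow> nat \<Rightarrow> 'v set" where
  "valence G t = {v. \<exists>G' p. adv_seq G' \<and> (\<forall>r. 1 \<le> r \<and> r \<le> t \<longrightarrow> G' r = G r)
                          \<and> p < n \<and> decides dec (st G') p v}"

definition bivalent :: "gseq \<Rightarrow> nat \<Rightarrow> bool" where
  "bivalent G t \<longleftrightarrow> (\<exists>v\<in>valence G t. \<exists>w\<in>valence G t. v \<noteq> w)"

lemma valenceI:
  "adv_seq G' \<Longrightarrow> \<forall>r. 1 \<le> r \<and> r \<le> t \<longrightarrow> G' r = G r \<Longrightarrow> p < n \<Longrightarrow> decides dec (st G') p v
    \<Longrightarrow> v \<in> valence G t"
  unfolding valence_def by blast

lemma valence_cong: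
  assumes "\<forall>r\<le>t. G r = G' r"
  shows "valence G t = valence G' t"
proof -
  have "(\<forall>r. 1 \<le> r \<and> r \<le> t \<longrightarrow> H r = G r) \<longleftrightarrow> (\<forall>r. 1 \<le> r \<and> r \<le> t \<longrightarrow> H r = G' r)" for H
    using assms by auto
  then show ?thesis unfolding valence_def by simp
qed

lemma prefix_seq_valence:
  assumes "prefix_graph X" "proc_set R" "p < n" "decides dec (st (prefix_seq X R)) p v"
  shows "v \<in> valence (prefix_seq X R') D"
  using valenceI[OF adv_seq_prefix_seq[OF assms(1,2)] _ assms(3,4)] by (simp add: prefix_seq_def)

text \<open>The root of line_graph a b hears only itself, so it cannot distinguish the actual inputs
  from all inputs being its own; validity then forces it to decide its own input.\<close>

lemma line_graph_root_decides_input: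
  assumes ab: "zero_one a b"
  shows "decides dec (st (prefix_seq (line_graph a b) {a})) a (inp a)"
proof -
  define G where "G = prefix_seq (line_graph a b) {a}"
  define own where "own = (\<lambda>_::nat. inp a)"
  have a: "a < n" using zero_one_less[OF ab] by simp
  have S: "adv_seq G"
    unfolding G_def using adv_seq_prefix_seq a ab by (auto simp: prefix_graph_def proc_set_def zero_one_def)
  have "\<forall>s>0. \<forall>p\<in>{a}. \<forall>q<n. ((q, p) \<in> G s \<longleftrightarrow> (q, p) \<in> G s) \<and> ((q, p) \<in> G s \<longrightarrow> q \<in> {a})"
    using line_graph_in_edge_root[OF ab] broadcast_graph_in_edge[OF a] unfolding G_def prefix_seq_def by auto
  then have same: "st G s a = run n init msg tr G own s a" for s
    by (rule run_cong_closed_set) (simp_all add: own_def)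
  obtain v where v: "decides dec (run n init msg tr G own) a v"
    using adv_seq_termination[OF S a] by blast
  then have "v = inp a" using adv_seq_validity[OF S a v] by (auto simp: own_def)
  then show ?thesis
    using v decides_cong[of "st G" a "run n init msg tr G own" dec v] same unfolding G_def by simp
qed

lemma line_biroot_common_valence:
  assumes ab: "zero_one a b"
  shows "\<exists>z. z \<in> valence (prefix_seq (line_graph a b) {0}) D
           \<and> z \<in> valence (prefix_seq (biroot_graph a b) {0}) D"
proof -
  define w where "w = chain a b D"
  define G where "G = prefix_seq (line_graph a b) {w}"
  define G' where "G' = prefix_seq (biroot_graph a b) {w}"
  have w: "w < n" unfolding w_def using chain_less[OF ab] by simp
  have X: "prefix_graph (line_graph a b)" "prefix_graph (biroot_graph a b)"
    using ab by (auto simp: prefix_graph_def zero_one_def)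
  have W: "proc_set {w}" using w by (simp add: proc_set_def)
  have early: "st G s w = st G' s w" if "s \<le> D" for s
    unfolding w_def
    by (rule chain_run_cong[OF ab _ that order_refl]) (simp add: G_def G'_def prefix_seq_def)
  have closed: "\<forall>s>D. \<forall>p\<in>{w}. \<forall>q<n. ((q, p) \<in> G s \<longleftrightarrow> (q, p) \<in> G' s) \<and> ((q, p) \<in> G s \<longrightarrow> q \<in> {w})"
    using broadcast_graph_in_edge[OF w] unfolding G_def G'_def prefix_seq_def by auto
  have "st G s w = st G' s w" for s
    using early run_cong_closed_set[OF closed, of init msg tr inp inp s w] by (cases "s \<le> D") auto
  then obtain z where "decides dec (st G) w z" "decides dec (st G') w z"
    using adv_seq_same_decision adv_seq_prefix_seq[OF X(1) W] w unfolding G_def by blast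
  then show ?thesis
    using prefix_seq_valence[OF X(1) W w] prefix_seq_valence[OF X(2) W w] unfolding G_def G'_def by blast
qed

lemma biroot_common_valence:
  "\<exists>z. z \<in> valence (prefix_seq (biroot_graph 0 1) {0}) D
     \<and> z \<in> valence (prefix_seq (biroot_graph 1 0) {0}) D"
proof -
  define G where "G = prefix_seq (biroot_graph 0 1) {0}"
  define G' where "G' = prefix_seq (biroot_graph 1 0) {0}"
  have ab: "zero_one 0 1" "zero_one 1 0" by (simp_all add: zero_one_def)
  have X: "prefix_graph (biroot_graph 0 1)" "prefix_graph (biroot_graph 1 0)"
    by (simp_all add: prefix_graph_def)
  have W: "proc_set {0}" using D_less by (simp add: proc_set_def)
  have "\<forall>s>0. \<forall>p\<in>{0, 1}. \<forall>q<n. ((q, p) \<in> G s \<longleftrightarrow> (q, p) \<in> G' s) \<and> ((q, p) \<in> G s \<longrightarrow> q \<in> {0, 1})"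
    using biroot_graph_in_edge_root[OF ab(1)] biroot_graph_in_edge_root[OF ab(2)]
      broadcast_graph_in_edge[of _ _ "{0}"] zero_one_less[OF ab(1)]
    unfolding G_def G'_def prefix_seq_def by (auto simp: insert_commute)
  then have "st G s 0 = st G' s 0" for s
    by (rule run_cong_closed_set) simp_all
  then obtain z where "decides dec (st G) 0 z" "decides dec (st G') 0 z"
    using adv_seq_same_decision adv_seq_prefix_seq[OF X(1) W] D_less unfolding G_def by blast
  then show ?thesis
    using prefix_seq_valence[OF X(1) W] prefix_seq_valence[OF X(2) W] D_less
    unfolding G_def G'_def by blast
qed

lemma prefix_bivalent: "\<exists>X. prefix_graph X \<and> bivalent (prefix_seq X {0}) D"
proof (rule ccontr)
  assume "\<not> ?thesis"
  then have univalent: "u = w"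
    if "prefix_graph X" "u \<in> valence (prefix_seq X {0}) D" "w \<in> valence (prefix_seq X {0}) D" for X u w
    using that unfolding bivalent_def by blast
  have ab: "zero_one 0 1" "zero_one 1 0" by (simp_all add: zero_one_def)
  have X: "prefix_graph (line_graph 0 1)" "prefix_graph (line_graph 1 0)"
    "prefix_graph (biroot_graph 0 1)" "prefix_graph (biroot_graph 1 0)"
    by (simp_all add: prefix_graph_def)
  have n: "0 < n" "1 < n" using D_pos D_less by simp_all
  have v0: "v0 \<in> valence (prefix_seq (line_graph 0 1) {0}) D"
    using prefix_seq_valence[OF X(1) _ n(1) line_graph_root_decides_input[OF ab(1)]] n
    by (simp add: proc_set_def inp_def)
  have v1: "v1 \<in> valence (prefix_seq (line_graph 1 0) {0}) D"
    using prefix_seq_valence[OF X(2) _ n(2) line_graph_root_decides_input[OF ab(2)]] n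
    by (simp add: proc_set_def inp_def)
  obtain z1 where z1: "z1 \<in> valence (prefix_seq (line_graph 0 1) {0}) D"
    "z1 \<in> valence (prefix_seq (biroot_graph 0 1) {0}) D"
    using line_biroot_common_valence[OF ab(1)] by blast
  obtain z2 where z2: "z2 \<in> valence (prefix_seq (biroot_graph 0 1) {0}) D"
    "z2 \<in> valence (prefix_seq (biroot_graph 1 0) {0}) D"
    using biroot_common_valence by blast
  obtain z3 where z3: "z3 \<in> valence (prefix_seq (line_graph 1 0) {0}) D"
    "z3 \<in> valence (prefix_seq (biroot_graph 1 0) {0}) D"
    using line_biroot_common_valence[OF ab(2)] by blast
  have "v0 = z1" using univalent[OF X(1) v0 z1(1)] .
  also have "\<dots> = z2" using univalent[OF X(3) z1(2) z2(1)] .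
  also have "\<dots> = z3" using univalent[OF X(4) z2(2) z3(2)] .
  also have "\<dots> = v1" using univalent[OF X(2) z3(1) v1] .
  finally show False using v0_neq_v1 by simp
qed

lemma valence_extend:
  assumes "D \<le> t" and "u \<in> valence G t"
  shows "\<exists>R. proc_set R \<and> u \<in> valence (G(Suc t := broadcast_graph R)) (Suc t)"
proof -
  obtain G' p where G': "adv_seq G'" "\<forall>r. 1 \<le> r \<and> r \<le> t \<longrightarrow> G' r = G r" "p < n" "decides dec (st G') p u"
    using assms(2) unfolding valence_def by blast
  have "D < Suc t" using assms(1) by simp
  then obtain R where R: "proc_set R" "G' (Suc t) = broadcast_graph R"
    using G'(1) unfolding adv_seq_def by blast
  have "\<forall>r. 1 \<le> r \<and> r \<le> Suc t \<longrightarrow> G' r = (G(Suc t := broadcast_graph R)) r"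
    using G'(2) R(2) by (auto simp: le_Suc_eq)
  then show ?thesis using valenceI[OF G'(1) _ G'(3,4)] R(1) by blast
qed

text \<open>Adding p to the round-(t+1) root and then isolating p forever is invisible to p.\<close>

lemma valence_link:
  assumes t: "D \<le> t" and "valence G t \<noteq> {}" and R: "proc_set R" and p: "p < n"
  shows "valence (G(Suc t := broadcast_graph R)) (Suc t)
           \<inter> valence (G(Suc t := broadcast_graph (insert p R))) (Suc t) \<noteq> {}"
proof -
  obtain G0 where G0: "adv_seq G0" "\<forall>r. 1 \<le> r \<and> r \<le> t \<longrightarrow> G0 r = G r"
    using assms(2) unfolding valence_def by blast
  define H where
    "H R' r = (if r \<le> t then G0 r else if r = Suc t then broadcast_graph R' else broadcast_graph {p})"
    for R' r
  have adv: "adv_seq (H R')" if "proc_set R'" for R'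
  proof (rule adv_seq_change_tail[OF G0(1) t])
    have "proc_set {p}" using p by (simp add: proc_set_def)
    then show "\<forall>r>t. \<exists>R. proc_set R \<and> H R' r = broadcast_graph R"
      using that unfolding H_def by auto
  qed (simp add: H_def)
  have prefix: "\<forall>r. 1 \<le> r \<and> r \<le> Suc t \<longrightarrow> H R' r = (G(Suc t := broadcast_graph R')) r" for R'
    using G0(2) by (auto simp: H_def le_Suc_eq)
  have early: "st (H R) s = st (H (insert p R)) s" if "s \<le> t" for s
    by (rule run_cong_prefix) (use that in \<open>simp add: H_def\<close>)
  have at: "st (H R) (Suc t) p = st (H (insert p R)) (Suc t) p"
    by (rule run_Suc_cong) (use early broadcast_graph_in_edge[OF p] in \<open>auto simp: H_def\<close>)
  have closed: "\<forall>s>Suc t. \<forall>p'\<in>{p}. \<forall>q<n. ((q, p') \<in> H R s \<longleftrightarrow> (q, p') \<in> H (insert p R) s)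
                  \<and> ((q, p') \<in> H R s \<longrightarrow> q \<in> {p})"
    using broadcast_graph_in_edge[OF p] by (auto simp: H_def)
  have "st (H R) s p = st (H (insert p R)) s p" for s
  proof (cases "s \<le> t")
    case False
    then show ?thesis using run_cong_closed_set[OF closed, of init msg tr inp inp s p] at by simp
  qed (use early in simp)
  then obtain z where "decides dec (st (H R)) p z" "decides dec (st (H (insert p R))) p z"
    using adv_seq_same_decision[OF adv[OF R] p] by blast
  moreover have "proc_set (insert p R)" using R p by (simp add: proc_set_def)
  ultimately show ?thesis using valenceI[OF adv prefix] p R by blast
qed

lemma bivalent_extension:
  assumes t: "D \<le> t" and "bivalent G t"
  shows "\<exists>R. proc_set R \<and> bivalent (G(Suc t := broadcast_graph R)) (Suc t)"
proof (rule ccontr)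
  assume none: "\<not> ?thesis"
  let ?V = "\<lambda>R. valence (G(Suc t := broadcast_graph R)) (Suc t)"
  obtain u w where uw: "u \<noteq> w" "u \<in> valence G t" "w \<in> valence G t"
    using assms(2) unfolding bivalent_def by blast
  obtain R S where R: "proc_set R" "u \<in> ?V R" and S: "proc_set S" "w \<in> ?V S"
    using valence_extend[OF t uw(2)] valence_extend[OF t uw(3)] by blast
  have "u = w"
  proof (rule linked_family_common_value[of "{..<n}" ?V])
    show "?V R \<inter> ?V (insert p R) \<noteq> {}" if "R \<noteq> {}" "R \<subseteq> {..<n}" "p \<in> {..<n}" for R p
      using valence_link[OF t] uw(2) that by (auto simp: proc_set_def)
    show "u = w" if "R \<noteq> {}" "R \<subseteq> {..<n}" "u \<in> ?V R" "w \<in> ?V R" for R u w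
      using none that unfolding bivalent_def proc_set_def by blast
  qed (use R S in \<open>auto simp: proc_set_def\<close>)
  then show False using uw(1) by simp
qed

lemma adv_seq_eventually_univalent:
  assumes "adv_seq H"
  shows "\<exists>t0. \<forall>t\<ge>t0. \<not> bivalent H t"
proof -
  have p: "0 < n" using D_less by simp
  obtain v where v: "decides dec (st H) 0 v" using adv_seq_termination[OF assms p] by blast
  obtain r0 where r0: "\<And>st'. \<forall>r\<le>r0. st' r 0 = st H r 0 \<Longrightarrow> decides dec st' 0 v"
    using decides_prefix[OF v] by blast
  have "u = v" if t: "r0 \<le> t" and u: "u \<in> valence H t" for t u
  proof -
    obtain G' q where G': "adv_seq G'" "\<forall>r. 1 \<le> r \<and> r \<le> t \<longrightarrow> G' r = H r" "q < n" "decides dec (st G') q u"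
      using u unfolding valence_def by blast
    have "st G' r = st H r" if "r \<le> r0" for r
      by (rule run_cong_prefix) (use G'(2) that t in auto)
    then have "decides dec (st G') 0 v" using r0 by simp
    then show "u = v" using adv_seq_agreement[OF G'(1) G'(3) p G'(4)] by simp
  qed
  then show ?thesis unfolding bivalent_def by blast
qed

lemma consensus_impossible: False
proof -
  obtain X0 where X0: "prefix_graph X0" "bivalent (prefix_seq X0 {0}) D"
    using prefix_bivalent by blast
  have "\<exists>a\<in>broadcast_graph ` Collect proc_set. bivalent (G(Suc t := a)) (Suc t)"
    if "D \<le> t" "bivalent G t" for G t
    using bivalent_extension[OF that] by blast
  moreover have "bivalent G' t" if "\<forall>r\<le>t. G r = G' r" "bivalent G t" for G G' t
    using that valence_cong[OF that(1)] unfolding bivalent_def by simp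
  ultimately obtain H where H: "\<forall>r\<le>D. H r = prefix_seq X0 {0} r"
    "\<forall>r>D. H r \<in> broadcast_graph ` Collect proc_set" "\<forall>t\<ge>D. bivalent H t"
    by (rule extension_forever[where P = bivalent, OF X0(2)]) blast+
  have "proc_set {0}" using D_less by (simp add: proc_set_def)
  then have "adv_seq H"
    by (rule adv_seq_change_tail[OF adv_seq_prefix_seq[OF X0(1)] order_refl]) (use H in auto)
  then obtain t0 where "\<forall>t\<ge>t0. \<not> bivalent H t"
    using adv_seq_eventually_univalent by blast
  then show False using H(3) by (meson max.cobounded1 max.cobounded2)
qed

end

lemma no_consensus_under_adv_seqs:
  fixes v0 v1 :: 'v
  assumes "1 \<le> D" "D < n" "v0 \<noteq> v1" "{G. chain_graphs.adv_seq n D G} \<subseteq> MA"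
  shows "\<not> solves_consensus n MA (init :: nat \<Rightarrow> 'v \<Rightarrow> 's) msg tr dec"
proof
  assume "solves_consensus n MA init msg tr dec"
  with assms interpret consensus_algorithm n D MA init msg tr dec v0 v1
    by unfold_locales auto
  show False by (rule consensus_impossible)
qed

theorem theorem2:
  fixes n D x :: nat and v0 v1 :: 'v
  assumes "1 \<le> D" and "D \<le> n - 1" and "1 \<le> x" and "x \<le> D" and "v0 \<noteq> v1"
  shows "\<not> (\<exists>(init :: nat \<Rightarrow> 'v \<Rightarrow> 's) (msg :: nat \<Rightarrow> 's \<Rightarrow> nat \<Rightarrow> 'm) tr dec.
              solves_consensus n (EV_STABLE n D x) init msg tr dec)
       \<and> \<not> (\<exists>(init :: nat \<Rightarrow> 'v \<Rightarrow> 's) (msg :: nat \<Rightarrow> 's \<Rightarrow> nat \<Rightarrow> 'm) tr dec.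
              solves_consensus n (EV_STABLE_init n D x) init msg tr dec)"
proof -
  have D: "1 \<le> D" "D < n" using assms(1,2) by simp_all
  then interpret chain_graphs n D by unfold_locales
  have init: "{G. adv_seq G} \<subseteq> EV_STABLE_init n D x"
    using adv_seq_EV_STABLE_init assms(3,4) by blast
  also have "EV_STABLE_init n D x \<subseteq> EV_STABLE n D x"
    unfolding EV_STABLE_init_def by blast
  finally show ?thesis
    using no_consensus_under_adv_seqs[OF D assms(5)] init by blast
qed

end
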